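(* Assume: (i) there is $L_f>0$ with $\|f(w,t)-f(y,t)\|_2\le L_f\|w-y\|_2$ for all $w,y\in\mathbb{R}^{N_s}$, $t\in[0,T]$; (ii) $\Delta t<\sigma_{\min}(A_{LM})/(L_f\sigma_{\max}(B_{LM}))$; (iii) there is $P>0$ with $\|\bar A\,\bar r(w)\|_2\ge P\|\bar r(w)\|_2$ for all $w\in\mathcal{S}$. Let $x\in\mathbb{R}^{N_sN_t}$ satisfy $\bar r(x)=0$ (the full-order solution) and let $\tilde x\in\arg\min_{w\in\mathcal{S}}\|\bar A\,\bar r(w)\|_2$ (the ST-LSPG solution). Then $$\|x-\tilde x\|_2\le\frac1P\,\frac{\sigma_{\max}(\bar A A_{LM})+\Delta t L_f\sigma_{\max}(\bar A B_{LM})}{\sigma_{\min}(A_{LM})-\Delta t L_f\sigma_{\max}(B_{LM})}\,\min_{w\in\mathcal{S}}\|x-w\|_2.$$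
   Context: Let $f:\mathbb{R}^{N_s}\times[0,T]\to\mathbb{R}^{N_s}$ be the velocity of the ODE $\dot x=f(x,t)$, $x(0)=x^0\in\mathbb{R}^{N_s}$. Use a uniform time grid $t^n=n\Delta t$, $n=0,\dots,N_t$, $\Delta t=T/N_t$. A linear multistep scheme is given by integers $k(n)\le n$ and coefficients $\alpha_j^n,\beta_j^n\in\mathbb{R}$, $j=0,\dots,k(n)$, $n=1,\dots,N_t$, with $\alpha_0^n\neq0$. For $w=(w^1,\dots,w^{N_t})\in\mathbb{R}^{N_sN_t}$ (blocks $w^n\in\mathbb{R}^{N_s}$) set $w^0:=x^0$ and define the residual at step $n$ by $r^n(w)=\sum_{j=0}^{k(n)}\alpha_j^n w^{n-j}-\Delta t\sum_{j=0}^{k(n)}\beta_j^n f(w^{n-j},t^{n-j})$, and the space–time residual $\bar r(w)=(r^1(w),\dots,r^{N_t}(w))\in\mathbb{R}^{N_sN_t}$. Let $A_{LM},B_{LM}\in\mathbb{R}^{N_sN_t\times N_sN_t}$ be the block lower-triangular matrices (blocks of size $N_s\times N_s$) whose $(n,n-j)$ block is $\alpha_j^n I_{N_s}$, resp. $\beta_j^n I_{N_s}$, for $0\le j\le k(n)$ with $n-j\ge1$, and zero otherwise. $\sigma_{\max}(M)$, $\sigma_{\min}(M)$ denote the largest and smallest singular values of $M$; $\|\cdot\|_2$ is the Euclidean norm on $\mathbb{R}^{N_sN_t}$. The space–time trial subspace is the affine subspace $\mathcal{S}=\{(x^0,\dots,x^0)+\sum_{i=1}^{n_{st}}c_i\pi_i: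 c\in\mathbb{R}^{n_{st}}\}\subseteq\mathbb{R}^{N_sN_t}$ for given vectors $\pi_1,\dots,\pi_{n_{st}}\in\mathbb{R}^{N_sN_t}$; $\bar A\in\mathbb{R}^{\bar z\times N_sN_t}$ is a weighting matrix. *)

theory Defs
  imports "HOL-Analysis.Analysis" "Jordan_Normal_Form.Matrix" "Jordan_Normal_Form.Char_Poly"
begin

definition vnorm2 :: "real vec \<Rightarrow> real" where
  "vnorm2 v = sqrt (\<Sum>i<dim_vec v. (v $ i)\<^sup>2)"

text \<open>Largest / smallest singular value: square roots of the largest / smallest
  eigenvalue of M^T M (M^T M is symmetric positive semidefinite, so all its
  eigenvalues are real and nonnegative).  sigma_min is only applied to square matrices.\<close>
definition sigma_max :: "real mat \<Rightarrow> real" where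
  "sigma_max M = sqrt (Max {l. eigenvalue (transpose_mat M * M) l})"

definition sigma_min :: "real mat \<Rightarrow> real" where
  "sigma_min M = sqrt (Min {l. eigenvalue (transpose_mat M * M) l})"

text \<open>Blocks of a space-time vector w (dimension Ns*Nt); block 0 is x0,
  block n (1 \<le> n \<le> Nt) consists of entries (n-1)*Ns .. n*Ns-1.\<close>
definition blk :: "nat \<Rightarrow> real vec \<Rightarrow> real vec \<Rightarrow> nat \<Rightarrow> real vec" where
  "blk Ns x0 w n = (if n = 0 then x0 else vec Ns (\<lambda>i. w $ ((n - 1) * Ns + i)))"

definition lm_res ::
  "nat \<Rightarrow> real \<Rightarrow> (real vec \<Rightarrow> real \<Rightarrow> real vec) \<Rightarrow> real vec \<Rightarrow>
   (nat \<Rightarrow> nat) \<Rightarrow> (nat \<Rightarrow> nat \<Rightarrow> real) \<Rightarrow> (nat \<Rightarrow> nat \<Rightarrow> real) \<Rightarrow>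
   real vec \<Rightarrow> nat \<Rightarrow> real vec" where
  "lm_res Ns dt f x0 k alpha beta w n =
     vec Ns (\<lambda>i. (\<Sum>j\<in>{0..k n}. alpha n j * (blk Ns x0 w (n - j) $ i))
        - dt * (\<Sum>j\<in>{0..k n}. beta n j * (f (blk Ns x0 w (n - j)) (real (n - j) * dt) $ i)))"

definition st_res ::
  "nat \<Rightarrow> nat \<Rightarrow> real \<Rightarrow> (real vec \<Rightarrow> real \<Rightarrow> real vec) \<Rightarrow> real vec \<Rightarrow>
   (nat \<Rightarrow> nat) \<Rightarrow> (nat \<Rightarrow> nat \<Rightarrow> real) \<Rightarrow> (nat \<Rightarrow> nat \<Rightarrow> real) \<Rightarrow>
   real vec \<Rightarrow> real vec" where
  "st_res Ns Nt dt f x0 k alpha beta w =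
     vec (Ns * Nt) (\<lambda>p. lm_res Ns dt f x0 k alpha beta w (p div Ns + 1) $ (p mod Ns))"

text \<open>Block lower-triangular matrix whose (n, n-j) block is c n j * I for
  0 \<le> j \<le> k n, n - j \<ge> 1 (blocks indexed 1..Nt), zero otherwise.\<close>
definition lm_mat :: "nat \<Rightarrow> nat \<Rightarrow> (nat \<Rightarrow> nat) \<Rightarrow> (nat \<Rightarrow> nat \<Rightarrow> real) \<Rightarrow> real mat" where
  "lm_mat Ns Nt k c = mat (Ns * Nt) (Ns * Nt) (\<lambda>(p, q).
      let n = p div Ns + 1; m = q div Ns + 1 in
      if p mod Ns = q mod Ns \<and> m \<le> n \<and> n - m \<le> k n then c n (n - m) else 0)"

text \<open>Affine trial subspace (x0,...,x0) + span{pi_1,...,pi_nst}.\<close>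
definition trial_space :: "nat \<Rightarrow> nat \<Rightarrow> real vec \<Rightarrow> nat \<Rightarrow> (nat \<Rightarrow> real vec) \<Rightarrow> real vec set" where
  "trial_space Ns Nt x0 nst pib =
     {vec (Ns * Nt) (\<lambda>p. x0 $ (p mod Ns) + (\<Sum>i\<in>{1..nst}. c i * (pib i $ p))) | c. True}"

end

theory Submission
  imports Defs
begin

text \<open>Because the full-order solution \<open>x\<close> has zero residual, the residual of any \<open>w\<close> is
  \<open>r(w) = A_LM (w - x) - \<Delta>t B_LM (F(w) - F(x))\<close>, where \<open>F\<close> stacks the velocities \<open>f(w\<^sup>n, t\<^sup>n)\<close>
  and is \<open>L\<^sub>f\<close>-Lipschitz because \<open>f\<close> is, block by block. Singular-value bounds then give stability,
  \<open>(\<sigma>_min(A_LM) - \<Delta>t L\<^sub>f \<sigma>_max(B_LM)) \<parallel>xt - x\<parallel> \<le> \<parallel>r(xt)\<parallel>\<close>, and continuity,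
  \<open>\<parallel>Abar r(w)\<parallel> \<le> (\<sigma>_max(Abar A_LM) + \<Delta>t L\<^sub>f \<sigma>_max(Abar B_LM)) \<parallel>x - w\<parallel>\<close>; chaining them through
  \<open>P \<parallel>r(xt)\<parallel> \<le> \<parallel>Abar r(xt)\<parallel> \<le> \<parallel>Abar r(w)\<parallel>\<close> for every \<open>w\<close> in the trial space gives the bound.
  The singular-value bounds are Rayleigh-quotient estimates for the Gram matrix \<open>M\<^sup>T M\<close>: the
  quadratic form of a symmetric matrix attains its minimum on the compact unit sphere, and a
  minimizer is an eigenvector because the correspondingly shifted matrix is positive semidefinite.\<close>

lemma scalar_prod_self_eq_sum: "scalar_prod (v :: real vec) v = (\<Sum>i<dim_vec v. (v $ i)\<^sup>2)"
  by (simp add: scalar_prod_def power2_eq_square lessThan_atLeast0)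

lemma scalar_prod_self_nonneg: "0 \<le> scalar_prod (v :: real vec) v"
  by (simp add: scalar_prod_self_eq_sum sum_nonneg)

lemma scalar_prod_self_eq_0_iff:
  assumes "(v :: real vec) \<in> carrier_vec n"
  shows "scalar_prod v v = 0 \<longleftrightarrow> v = 0\<^sub>v n"
  using assms by (auto simp: scalar_prod_self_eq_sum sum_nonneg_eq_0_iff intro!: eq_vecI)

lemma vnorm2_eq_sqrt_scalar_prod: "vnorm2 v = sqrt (scalar_prod v v)"
  by (simp add: vnorm2_def scalar_prod_self_eq_sum)

lemma vnorm2_eq_L2_set: "vnorm2 v = L2_set (($) v) {..<dim_vec v}"
  by (simp add: vnorm2_def L2_set_def)

lemma vnorm2_nonneg: "0 \<le> vnorm2 v"
  by (simp add: vnorm2_eq_L2_set)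

lemma vnorm2_smult: "vnorm2 (c \<cdot>\<^sub>v v) = \<bar>c\<bar> * vnorm2 v"
proof -
  have "vnorm2 (c \<cdot>\<^sub>v v) = sqrt (c\<^sup>2 * (\<Sum>i<dim_vec v. (v $ i)\<^sup>2))"
    by (simp add: vnorm2_def sum_distrib_left power_mult_distrib)
  then show ?thesis by (simp add: real_sqrt_mult vnorm2_def)
qed

lemma vnorm2_add_le:
  assumes "a \<in> carrier_vec n" "b \<in> carrier_vec n"
  shows "vnorm2 (a + b) \<le> vnorm2 a + vnorm2 b"
proof -
  have "vnorm2 (a + b) = L2_set (\<lambda>i. a $ i + b $ i) {..<n}"
    unfolding vnorm2_eq_L2_set using assms by (intro L2_set_cong) auto
  also have "\<dots> \<le> L2_set (($) a) {..<n} + L2_set (($) b) {..<n}"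
    by (rule L2_set_triangle_ineq)
  finally show ?thesis using assms by (simp add: vnorm2_eq_L2_set)
qed

lemma vnorm2_diff_le:
  assumes "a \<in> carrier_vec n" "b \<in> carrier_vec n"
  shows "vnorm2 (a - b) \<le> vnorm2 a + vnorm2 b"
proof -
  have "a - b = a + (-1) \<cdot>\<^sub>v b" using assms by (intro eq_vecI) auto
  then show ?thesis using vnorm2_add_le[of a n "(-1) \<cdot>\<^sub>v b"] assms by (simp add: vnorm2_smult)
qed

lemma vnorm2_le_diff_add:
  assumes "a \<in> carrier_vec n" "b \<in> carrier_vec n"
  shows "vnorm2 a \<le> vnorm2 (a - b) + vnorm2 b"
proof -
  have "a = (a - b) + b" using assms by auto
  then show ?thesis using vnorm2_add_le[of "a - b" n b] assms by simp
qed

lemma vnorm2_minus_commute: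
  assumes "a \<in> carrier_vec n" "b \<in> carrier_vec n"
  shows "vnorm2 (a - b) = vnorm2 (b - a)"
proof -
  have "b - a = (-1) \<cdot>\<^sub>v (a - b)" using assms by (intro eq_vecI) auto
  then show ?thesis by (simp add: vnorm2_smult)
qed

lemma vnorm2_le_iff_scalar_prod_le:
  assumes "0 \<le> L"
  shows "vnorm2 a \<le> L * vnorm2 b \<longleftrightarrow> scalar_prod a a \<le> L\<^sup>2 * scalar_prod b b"
proof -
  have "vnorm2 a \<le> L * vnorm2 b \<longleftrightarrow> sqrt (scalar_prod a a) \<le> sqrt (L\<^sup>2 * scalar_prod b b)"
    using assms by (simp add: vnorm2_eq_sqrt_scalar_prod real_sqrt_mult)
  then show ?thesis by simp
qed

section \<open>Extreme eigenvalues of symmetric matrices\<close>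

lemma nonneg_quadratic_imp_linear_coeff_eq_0:
  fixes a b :: real
  assumes nonneg: "\<And>t. 0 \<le> a * t + b * t\<^sup>2"
  shows "a = 0"
proof (rule ccontr)
  assume "a \<noteq> 0"
  define c where "c = \<bar>b\<bar> + 1"
  have c: "0 < c" "b < c" by (auto simp: c_def)
  have "a * (- a / c) + b * (- a / c)\<^sup>2 = a\<^sup>2 * (b - c) / c\<^sup>2"
    using c by (simp add: field_simps power2_eq_square)
  also have "\<dots> < 0"
    using c \<open>a \<noteq> 0\<close> by (intro divide_neg_pos mult_pos_neg) auto
  finally show False using nonneg[of "- a / c"] by linarith
qed

lemma quadratic_form_eq_double_sum:
  assumes "S \<in> carrier_mat n n" "w \<in> carrier_vec n"
  shows "scalar_prod w (S *\<^sub>v w) = (\<Sum>i<n. \<Sum>j<n. w $ i * S $$ (i, j) * w $ j)"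
  using assms by (simp add: scalar_prod_def lessThan_atLeast0 row_def sum_distrib_left mult.assoc)

lemma quadratic_form_smult:
  assumes "(S :: real mat) \<in> carrier_mat n n" "w \<in> carrier_vec n"
  shows "scalar_prod (c \<cdot>\<^sub>v w) (S *\<^sub>v (c \<cdot>\<^sub>v w)) = c\<^sup>2 * scalar_prod w (S *\<^sub>v w)"
  using assms by (simp add: mult_mat_vec power2_eq_square)

lemma quadratic_form_via_unit_vector:
  assumes S: "(S :: real mat) \<in> carrier_mat n n" and w: "w \<in> carrier_vec n" "w \<noteq> 0\<^sub>v n"
  obtains u where "u \<in> carrier_vec n" "scalar_prod u u = 1"
    "scalar_prod w (S *\<^sub>v w) = scalar_prod w w * scalar_prod u (S *\<^sub>v u)"
proof
  have pos: "0 < scalar_prod w w"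
    using w scalar_prod_self_nonneg[of w] scalar_prod_self_eq_0_iff[of w n] by linarith
  define c where "c = 1 / sqrt (scalar_prod w w)"
  have c2: "c\<^sup>2 * scalar_prod w w = 1" using pos by (simp add: c_def power_divide)
  show "c \<cdot>\<^sub>v w \<in> carrier_vec n" using w by simp
  show "scalar_prod (c \<cdot>\<^sub>v w) (c \<cdot>\<^sub>v w) = 1" using w c2 by (simp add: power2_eq_square)
  show "scalar_prod w (S *\<^sub>v w) = scalar_prod w w * scalar_prod (c \<cdot>\<^sub>v w) (S *\<^sub>v (c \<cdot>\<^sub>v w))"
    using c2 by (simp add: quadratic_form_smult[OF S w(1)] mult.commute)
qed

lemma quadratic_form_attains_min_on_unit_sphere:
  assumes S: "(S :: real mat) \<in> carrier_mat n n" and n: "0 < n"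
  obtains u where "u \<in> carrier_vec n" "scalar_prod u u = 1"
    "\<And>w. w \<in> carrier_vec n \<Longrightarrow> scalar_prod w w = 1 \<Longrightarrow>
       scalar_prod u (S *\<^sub>v u) \<le> scalar_prod w (S *\<^sub>v w)"
proof -
  \<comment> \<open>The unit sphere, parametrized by functions vanishing outside \<open>{..<n}\<close>, is compact
    in the product topology on \<open>nat \<Rightarrow> real\<close>.\<close>
  define K where "K = Pi UNIV (\<lambda>i. if i < n then {-1..1} else {0}) \<inter> {g. (\<Sum>i<n. (g i)\<^sup>2) = (1::real)}"
  define Q where "Q g = (\<Sum>i<n. \<Sum>j<n. g i * S $$ (i, j) * g j)" for g :: "nat \<Rightarrow> real"
  have coord: "continuous_on A (\<lambda>g :: nat \<Rightarrow> real. g i)" for A i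
    by (rule continuous_on_subset[OF continuous_on_product_coordinates]) simp
  have "compactin (product_topology (\<lambda>_. euclidean) UNIV)
      (PiE UNIV (\<lambda>i. if i < n then {-1..1::real} else {0}))"
    by (subst compactin_PiE) (auto simp: compactin_euclidean_iff)
  then have "compact (Pi UNIV (\<lambda>i. if i < n then {-1..1::real} else {0}))"
    by (simp add: euclidean_product_topology compactin_euclidean_iff PiE_UNIV_domain)
  then have "compact K"
    unfolding K_def by (intro compact_Int_closed closed_Collect_eq continuous_intros coord)
  moreover have "(\<lambda>i. if i = 0 then 1 else 0) \<in> K"
    using n by (auto simp: K_def if_distrib[of "\<lambda>x. x\<^sup>2"] cong: if_cong)
  moreover have "continuous_on K Q"
    unfolding Q_def by (intro continuous_intros coord)
  ultimately obtain g0 where g0: "g0 \<in> K" and min: "\<And>g. g \<in> K \<Longrightarrow> Q g0 \<le> Q g"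
    using continuous_attains_inf[of K Q] by blast
  have Q_vec: "Q g = scalar_prod (vec n g) (S *\<^sub>v vec n g)" for g
    unfolding quadratic_form_eq_double_sum[OF S vec_carrier] Q_def by simp
  show thesis
  proof
    show "vec n g0 \<in> carrier_vec n" by simp
    show "scalar_prod (vec n g0) (vec n g0) = 1"
      using g0 by (simp add: scalar_prod_self_eq_sum K_def)
  next
    fix w :: "real vec" assume w: "w \<in> carrier_vec n" "scalar_prod w w = 1"
    define g where "g i = (if i < n then w $ i else 0)" for i
    have w_eq: "vec n g = w" using w by (auto simp: g_def)
    have sq: "(\<Sum>i<n. (g i)\<^sup>2) = 1"
      using w by (simp add: g_def scalar_prod_self_eq_sum)
    have "(g i)\<^sup>2 \<le> 1" if "i < n" for i
      using member_le_sum[of i "{..<n}" "\<lambda>i. (g i)\<^sup>2"] that sq by simp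
    then have "\<bar>g i\<bar> \<le> 1" if "i < n" for i
      using that abs_square_le_1 by blast
    then have "g \<in> K"
      using sq by (auto simp: K_def abs_le_iff) (auto simp: g_def)
    then show "scalar_prod (vec n g0) (S *\<^sub>v vec n g0) \<le> scalar_prod w (S *\<^sub>v w)"
      using min Q_vec w_eq by metis
  qed
qed

lemma psd_quadratic_form_eq_0_imp_null:
  fixes M :: "real mat"
  assumes M: "M \<in> carrier_mat n n" "transpose_mat M = M"
    and psd: "\<And>w. w \<in> carrier_vec n \<Longrightarrow> 0 \<le> scalar_prod w (M *\<^sub>v w)"
    and v: "v \<in> carrier_vec n" "scalar_prod v (M *\<^sub>v v) = 0"
  shows "M *\<^sub>v v = 0\<^sub>v n"
proof -
  define r where "r = M *\<^sub>v v"
  have r: "r \<in> carrier_vec n" and Mr: "M *\<^sub>v r \<in> carrier_vec n"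
    using M v by (auto simp: r_def)
  have vMr: "scalar_prod v (M *\<^sub>v r) = scalar_prod r r"
    using transpose_vec_mult_scalar[OF M(1) r v(1)] M(2) comm_scalar_prod[OF r Mr]
    by (simp add: r_def)
  have "0 \<le> (2 * scalar_prod r r) * t + scalar_prod r (M *\<^sub>v r) * t\<^sup>2" for t
  proof -
    have "0 \<le> scalar_prod (v + t \<cdot>\<^sub>v r) (M *\<^sub>v (v + t \<cdot>\<^sub>v r))"
      using psd v r by simp
    also have "\<dots> = scalar_prod v (M *\<^sub>v v) + t * scalar_prod v (M *\<^sub>v r)
        + t * scalar_prod r (M *\<^sub>v v) + t\<^sup>2 * scalar_prod r (M *\<^sub>v r)"
      using M v r Mr
      by (simp add: mult_add_distrib_mat_vec[of M n n] mult_mat_vec add_scalar_prod_distrib[of _ n]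
          scalar_prod_add_distrib[of _ n] power2_eq_square algebra_simps)
    finally show ?thesis
      using v vMr by (simp add: r_def algebra_simps)
  qed
  then have "scalar_prod r r = 0"
    using nonneg_quadratic_imp_linear_coeff_eq_0[of "2 * scalar_prod r r" "scalar_prod r (M *\<^sub>v r)"]
    by simp
  then show ?thesis
    using scalar_prod_self_eq_0_iff[OF r] by (simp add: r_def)
qed

lemma char_matrix_mult_vec:
  assumes "(S :: real mat) \<in> carrier_mat n n" "w \<in> carrier_vec n"
  shows "char_matrix S l *\<^sub>v w = S *\<^sub>v w - l \<cdot>\<^sub>v w"
  using assms by (intro eq_vecI) (auto simp: char_matrix_def add_scalar_prod_distrib[of _ n])

lemma symmetric_mat_min_eigenvalue:
  fixes S :: "real mat"
  assumes S: "S \<in> carrier_mat n n" "transpose_mat S = S" and n: "0 < n"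
  obtains l where "eigenvalue S l"
    "\<And>w. w \<in> carrier_vec n \<Longrightarrow> l * scalar_prod w w \<le> scalar_prod w (S *\<^sub>v w)"
proof -
  obtain u where u: "u \<in> carrier_vec n" "scalar_prod u u = 1"
    and min: "\<And>w. w \<in> carrier_vec n \<Longrightarrow> scalar_prod w w = 1 \<Longrightarrow>
       scalar_prod u (S *\<^sub>v u) \<le> scalar_prod w (S *\<^sub>v w)"
    using quadratic_form_attains_min_on_unit_sphere[OF S(1) n] by blast
  define l where "l = scalar_prod u (S *\<^sub>v u)"
  have bound: "l * scalar_prod w w \<le> scalar_prod w (S *\<^sub>v w)" if w: "w \<in> carrier_vec n" for w
  proof (cases "w = 0\<^sub>v n")
    case False
    then obtain v where "v \<in> carrier_vec n" "scalar_prod v v = 1"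
      "scalar_prod w (S *\<^sub>v w) = scalar_prod w w * scalar_prod v (S *\<^sub>v v)"
      using quadratic_form_via_unit_vector[OF S(1) w] by blast
    then show ?thesis
      using min scalar_prod_self_nonneg[of w] by (simp add: l_def mult.commute mult_left_mono)
  qed (use S in simp)
  \<comment> \<open>\<open>S - l I\<close> is positive semidefinite and its quadratic form vanishes at the minimizer \<open>u\<close>.\<close>
  let ?M = "char_matrix S l"
  have quad_M: "scalar_prod w (?M *\<^sub>v w) = scalar_prod w (S *\<^sub>v w) - l * scalar_prod w w"
    if "w \<in> carrier_vec n" for w
    using that S by (simp add: char_matrix_mult_vec scalar_prod_minus_distrib[of _ n])
  have "transpose_mat ?M = ?M"
    using S by (auto simp: char_matrix_def intro!: eq_matI) (metis carrier_matD index_transpose_mat(1))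
  then have "?M *\<^sub>v u = 0\<^sub>v n"
    using psd_quadratic_form_eq_0_imp_null[of ?M n u] S u bound quad_M by (simp add: l_def)
  then have "eigenvalue S l"
    using u S by (auto simp: eigenvalue_def eigenvector_char_matrix)
  then show thesis using bound by (rule that)
qed

lemma eigenvalue_uminus_mat:
  assumes "(S :: real mat) \<in> carrier_mat n n" "eigenvalue (- S) l"
  shows "eigenvalue S (- l)"
proof -
  obtain v where v: "v \<in> carrier_vec n" "v \<noteq> 0\<^sub>v n" "- S *\<^sub>v v = l \<cdot>\<^sub>v v"
    using assms by (auto simp: eigenvalue_def eigenvector_def)
  then have neg: "- (S *\<^sub>v v) = l \<cdot>\<^sub>v v"
    using assms(1) by simp
  have "S *\<^sub>v v = (- l) \<cdot>\<^sub>v v"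
  proof (rule eq_vecI)
    fix i assume "i < dim_vec ((- l) \<cdot>\<^sub>v v)"
    then show "(S *\<^sub>v v) $ i = ((- l) \<cdot>\<^sub>v v) $ i"
      using arg_cong[OF neg, of "\<lambda>x. vec_index x i"] v assms(1) by simp
  qed (use v assms(1) in simp)
  then show ?thesis
    using v assms(1) by (auto simp: eigenvalue_def eigenvector_def)
qed

lemma symmetric_mat_max_eigenvalue:
  fixes S :: "real mat"
  assumes S: "S \<in> carrier_mat n n" "transpose_mat S = S" and n: "0 < n"
  obtains l where "eigenvalue S l"
    "\<And>w. w \<in> carrier_vec n \<Longrightarrow> scalar_prod w (S *\<^sub>v w) \<le> l * scalar_prod w w"
proof -
  have "- S \<in> carrier_mat n n" "transpose_mat (- S) = - S"
    using S by (auto simp: transpose_uminus)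
  then obtain l where "eigenvalue (- S) l"
    and "\<And>w. w \<in> carrier_vec n \<Longrightarrow> l * scalar_prod w w \<le> scalar_prod w (- S *\<^sub>v w)"
    using symmetric_mat_min_eigenvalue n by blast
  then show thesis
    using S eigenvalue_uminus_mat[OF S(1)] by (intro that[of "- l"]) force+
qed

lemma finite_eigenvalues:
  assumes "(S :: real mat) \<in> carrier_mat n n"
  shows "finite {l. eigenvalue S l}"
proof -
  have "char_poly S \<noteq> 0" using degree_monic_char_poly[OF assms] by auto
  then show ?thesis unfolding eigenvalue_root_char_poly[OF assms] by (rule poly_roots_finite)
qed

section \<open>Singular value bounds\<close>

lemma gram_mat_carrier_symmetric:
  assumes "(M :: real mat) \<in> carrier_mat m n"
  shows "transpose_mat M * M \<in> carrier_mat n n"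
    and "transpose_mat (transpose_mat M * M) = transpose_mat M * M"
  using assms by (auto simp: transpose_mult[of _ n m _ n])

lemma scalar_prod_mult_mat_vec_self:
  assumes M: "(M :: real mat) \<in> carrier_mat m n" and v: "v \<in> carrier_vec n"
  shows "scalar_prod (M *\<^sub>v v) (M *\<^sub>v v) = scalar_prod v ((transpose_mat M * M) *\<^sub>v v)"
proof -
  have "(transpose_mat M * M) *\<^sub>v v = transpose_mat M *\<^sub>v (M *\<^sub>v v)"
    using M v by (intro assoc_mult_mat_vec) auto
  then show ?thesis
    using transpose_vec_mult_scalar[OF M v, of "M *\<^sub>v v"] comm_scalar_prod[of v n] M v by simp
qed

lemma vnorm2_mult_mat_vec_le_sigma_max:
  assumes M: "(M :: real mat) \<in> carrier_mat m n" and n: "0 < n" and v: "v \<in> carrier_vec n"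
  shows "vnorm2 (M *\<^sub>v v) \<le> sigma_max M * vnorm2 v"
proof -
  let ?G = "transpose_mat M * M"
  obtain l where l: "eigenvalue ?G l"
    and bound: "\<And>w. w \<in> carrier_vec n \<Longrightarrow> scalar_prod w (?G *\<^sub>v w) \<le> l * scalar_prod w w"
    using symmetric_mat_max_eigenvalue[OF gram_mat_carrier_symmetric[OF M] n] by blast
  have "l \<le> Max {l. eigenvalue ?G l}"
    using l finite_eigenvalues[OF gram_mat_carrier_symmetric(1)[OF M]] by (intro Max_ge) auto
  then have "scalar_prod (M *\<^sub>v v) (M *\<^sub>v v) \<le> Max {l. eigenvalue ?G l} * scalar_prod v v"
    using bound[OF v] scalar_prod_mult_mat_vec_self[OF M v] scalar_prod_self_nonneg[of v]
    by (smt (verit) mult_right_mono)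
  then show ?thesis
    by (simp add: vnorm2_eq_sqrt_scalar_prod sigma_max_def real_sqrt_mult[symmetric])
qed

lemma sigma_min_mult_vnorm2_le:
  assumes A: "(A :: real mat) \<in> carrier_mat n n" and n: "0 < n" and v: "v \<in> carrier_vec n"
  shows "sigma_min A * vnorm2 v \<le> vnorm2 (A *\<^sub>v v)"
proof -
  let ?G = "transpose_mat A * A"
  obtain l where l: "eigenvalue ?G l"
    and bound: "\<And>w. w \<in> carrier_vec n \<Longrightarrow> l * scalar_prod w w \<le> scalar_prod w (?G *\<^sub>v w)"
    using symmetric_mat_min_eigenvalue[OF gram_mat_carrier_symmetric[OF A] n] by blast
  have "Min {l. eigenvalue ?G l} \<le> l"
    using l finite_eigenvalues[OF gram_mat_carrier_symmetric(1)[OF A]] by (intro Min_le) auto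
  then have "Min {l. eigenvalue ?G l} * scalar_prod v v \<le> scalar_prod (A *\<^sub>v v) (A *\<^sub>v v)"
    using bound[OF v] scalar_prod_mult_mat_vec_self[OF A v] scalar_prod_self_nonneg[of v]
    by (smt (verit) mult_right_mono)
  then show ?thesis
    by (simp add: vnorm2_eq_sqrt_scalar_prod sigma_min_def real_sqrt_mult[symmetric])
qed

lemma sigma_max_nonneg:
  assumes M: "(M :: real mat) \<in> carrier_mat m n" and n: "0 < n"
  shows "0 \<le> sigma_max M"
proof -
  let ?v = "vec n (\<lambda>_. 1 :: real)"
  have "0 < vnorm2 ?v" using n by (simp add: vnorm2_def)
  moreover have "0 \<le> sigma_max M * vnorm2 ?v"
    using vnorm2_mult_mat_vec_le_sigma_max[OF M n, of ?v] vnorm2_nonneg[of "M *\<^sub>v ?v"] by simp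
  ultimately show ?thesis by (simp add: zero_le_mult_iff)
qed

lemma vnorm2_smult_mult_mat_vec_le:
  assumes M: "(M :: real mat) \<in> carrier_mat m n" and n: "0 < n" and d: "d \<in> carrier_vec n"
    and dt: "0 \<le> dt" and d_le: "vnorm2 d \<le> L * vnorm2 e"
  shows "vnorm2 (dt \<cdot>\<^sub>v (M *\<^sub>v d)) \<le> dt * L * sigma_max M * vnorm2 e"
proof -
  have "vnorm2 (dt \<cdot>\<^sub>v (M *\<^sub>v d)) = dt * vnorm2 (M *\<^sub>v d)"
    using dt by (simp add: vnorm2_smult)
  also have "\<dots> \<le> dt * (sigma_max M * vnorm2 d)"
    using vnorm2_mult_mat_vec_le_sigma_max[OF M n d] dt by (rule mult_left_mono)
  also have "\<dots> \<le> dt * (sigma_max M * (L * vnorm2 e))"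
    using d_le dt sigma_max_nonneg[OF M n] by (intro mult_left_mono) auto
  finally show ?thesis by (simp add: algebra_simps)
qed

lemma residual_lower_bound:
  assumes A: "(A :: real mat) \<in> carrier_mat n n" and B: "B \<in> carrier_mat n n" and n: "0 < n"
    and e: "e \<in> carrier_vec n" and d: "d \<in> carrier_vec n"
    and dt: "0 \<le> dt" and d_le: "vnorm2 d \<le> L * vnorm2 e"
  shows "(sigma_min A - dt * L * sigma_max B) * vnorm2 e \<le> vnorm2 (A *\<^sub>v e - dt \<cdot>\<^sub>v (B *\<^sub>v d))"
proof -
  have "sigma_min A * vnorm2 e \<le> vnorm2 (A *\<^sub>v e)"
    by (rule sigma_min_mult_vnorm2_le[OF A n e])
  also have "\<dots> \<le> vnorm2 (A *\<^sub>v e - dt \<cdot>\<^sub>v (B *\<^sub>v d)) + vnorm2 (dt \<cdot>\<^sub>v (B *\<^sub>v d))"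
    using A B e d by (intro vnorm2_le_diff_add[of _ n]) auto
  also have "\<dots> \<le> vnorm2 (A *\<^sub>v e - dt \<cdot>\<^sub>v (B *\<^sub>v d)) + dt * L * sigma_max B * vnorm2 e"
    using vnorm2_smult_mult_mat_vec_le[OF B n d dt d_le] by simp
  finally show ?thesis by (simp add: algebra_simps)
qed

lemma weighted_residual_upper_bound:
  assumes C: "(C :: real mat) \<in> carrier_mat m n"
    and A: "A \<in> carrier_mat n n" and B: "B \<in> carrier_mat n n" and n: "0 < n"
    and e: "e \<in> carrier_vec n" and d: "d \<in> carrier_vec n"
    and dt: "0 \<le> dt" and d_le: "vnorm2 d \<le> L * vnorm2 e"
  shows "vnorm2 (C *\<^sub>v (A *\<^sub>v e - dt \<cdot>\<^sub>v (B *\<^sub>v d)))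
    \<le> (sigma_max (C * A) + dt * L * sigma_max (C * B)) * vnorm2 e"
proof -
  have CA: "C * A \<in> carrier_mat m n" and CB: "C * B \<in> carrier_mat m n" using C A B by auto
  have "C *\<^sub>v (A *\<^sub>v e - dt \<cdot>\<^sub>v (B *\<^sub>v d)) = (C * A) *\<^sub>v e - dt \<cdot>\<^sub>v ((C * B) *\<^sub>v d)"
    using C A B e d by (simp add: mult_minus_distrib_mat_vec[of C m n] assoc_mult_mat_vec[of _ m n]
        mult_mat_vec[of C m n])
  also have "vnorm2 \<dots> \<le> vnorm2 ((C * A) *\<^sub>v e) + vnorm2 (dt \<cdot>\<^sub>v ((C * B) *\<^sub>v d))"
    using CA CB e d by (intro vnorm2_diff_le[of _ m]) auto
  also have "\<dots> \<le> sigma_max (C * A) * vnorm2 e + dt * L * sigma_max (C * B) * vnorm2 e"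
    using vnorm2_mult_mat_vec_le_sigma_max[OF CA n e] vnorm2_smult_mult_mat_vec_le[OF CB n d dt d_le]
    by (rule add_mono)
  finally show ?thesis by (simp add: algebra_simps)
qed

section \<open>Space-time structure of the multistep residual\<close>

lemma block_index_less:
  fixes m i Ns Nt :: nat
  assumes "m < Nt" "i < Ns"
  shows "m * Ns + i < Ns * Nt"
proof -
  have "m * Ns + i < (m + 1) * Ns" using assms by simp
  also have "\<dots> \<le> Nt * Ns" using assms by (intro mult_right_mono) auto
  finally show ?thesis by (simp add: mult.commute)
qed

lemma sum_lessThan_mult_blocks:
  fixes Ns Nt :: nat
  shows "(\<Sum>q<Ns * Nt. g q) = (\<Sum>m<Nt. \<Sum>i<Ns. g (m * Ns + i))"
proof (induction Nt)
  case (Suc Nt)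
  have "(\<Sum>q<Ns * Suc Nt. g q) = (\<Sum>q<Ns * Nt. g q) + (\<Sum>q\<in>{Ns * Nt..<Ns * Nt + Ns}. g q)"
    by (simp add: sum.atLeastLessThan_concat[symmetric] lessThan_atLeast0 algebra_simps)
  also have "(\<Sum>q\<in>{Ns * Nt..<Ns * Nt + Ns}. g q) = (\<Sum>i<Ns. g (Nt * Ns + i))"
    by (rule sum.reindex_bij_witness[of _ "\<lambda>i. Nt * Ns + i" "\<lambda>q. q - Nt * Ns"])
      (auto simp: mult.commute)
  finally show ?case using Suc by simp
qed simp

lemma lm_mat_carrier: "lm_mat Ns Nt k c \<in> carrier_mat (Ns * Nt) (Ns * Nt)"
  by (simp add: lm_mat_def)

lemma lm_mat_mult_vec_index:
  assumes Ns: "0 < Ns" and p: "p < Ns * Nt" and z: "z \<in> carrier_vec (Ns * Nt)"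
  shows "(lm_mat Ns Nt k c *\<^sub>v z) $ p =
    (\<Sum>j | j \<in> {0..k (p div Ns + 1)} \<and> j \<le> p div Ns.
       c (p div Ns + 1) j * z $ ((p div Ns - j) * Ns + p mod Ns))"
proof -
  define n where "n = p div Ns"
  define i0 where "i0 = p mod Ns"
  have i0: "i0 < Ns" using Ns by (simp add: i0_def)
  have n: "n < Nt" using p Ns by (simp add: n_def less_mult_imp_div_less mult.commute)
  let ?active = "\<lambda>m. m \<le> n \<and> n - m \<le> k (n + 1)"
  have entry: "lm_mat Ns Nt k c $$ (p, m * Ns + i) =
      (if i = i0 then if ?active m then c (n + 1) (n - m) else 0 else 0)" if "m < Nt" "i < Ns" for m i
    using that p block_index_less[OF that] by (auto simp: lm_mat_def Let_def n_def i0_def)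
  have "(lm_mat Ns Nt k c *\<^sub>v z) $ p = (\<Sum>q<Ns * Nt. lm_mat Ns Nt k c $$ (p, q) * z $ q)"
    using p z by (simp add: lm_mat_def scalar_prod_def lessThan_atLeast0 row_def)
  also have "\<dots> = (\<Sum>m<Nt. \<Sum>i<Ns. lm_mat Ns Nt k c $$ (p, m * Ns + i) * z $ (m * Ns + i))"
    by (rule sum_lessThan_mult_blocks)
  also have "\<dots> = (\<Sum>m<Nt. if ?active m then c (n + 1) (n - m) * z $ (m * Ns + i0) else 0)"
    using i0 by (intro sum.cong refl) (simp add: entry if_distrib[of "\<lambda>x. x * _"] cong: if_cong)
  also have "\<dots> = (\<Sum>m | m < Nt \<and> ?active m. c (n + 1) (n - m) * z $ (m * Ns + i0))"
    by (simp add: sum.inter_filter[symmetric] Collect_conj_eq lessThan_def)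
  also have "\<dots> = (\<Sum>j | j \<in> {0..k (n + 1)} \<and> j \<le> n. c (n + 1) j * z $ ((n - j) * Ns + i0))"
    by (rule sum.reindex_bij_witness[of _ "\<lambda>j. n - j" "\<lambda>m. n - m"]) (use n in auto)
  finally show ?thesis by (simp add: n_def i0_def)
qed

text \<open>With \<open>g n v = f v (n \<Delta>t)\<close> this is the space-time velocity \<open>F(w) = (f(w\<^sup>1, t\<^sup>1), ..., f(w\<^sup>N\<^sup>t, t\<^sup>N\<^sup>t))\<close>.\<close>

definition st_map :: "nat \<Rightarrow> nat \<Rightarrow> (nat \<Rightarrow> real vec \<Rightarrow> real vec) \<Rightarrow> real vec \<Rightarrow> real vec \<Rightarrow> real vec" where
  "st_map Ns Nt g x0 w = vec (Ns * Nt) (\<lambda>q. g (q div Ns + 1) (blk Ns x0 w (q div Ns + 1)) $ (q mod Ns))"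

lemma st_map_carrier: "st_map Ns Nt g x0 w \<in> carrier_vec (Ns * Nt)"
  by (simp add: st_map_def)

lemma st_map_id:
  assumes "0 < Ns" "w \<in> carrier_vec (Ns * Nt)"
  shows "st_map Ns Nt (\<lambda>_ v. v) x0 w = w"
proof (rule eq_vecI)
  fix q assume "q < dim_vec w"
  then have "q < Ns * Nt" using assms by simp
  moreover have "(q div Ns) * Ns + q mod Ns = q" by simp
  ultimately show "st_map Ns Nt (\<lambda>_ v. v) x0 w $ q = w $ q"
    using assms by (simp add: st_map_def blk_def)
qed (use assms in \<open>simp add: st_map_def\<close>)

lemma sum_mult_diff_eq_sum_le:
  fixes a b c :: "nat \<Rightarrow> real"
  assumes "\<And>j. n < j \<Longrightarrow> a j = b j"
  shows "(\<Sum>j\<in>{0..K}. c j * a j) - (\<Sum>j\<in>{0..K}. c j * b j) =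
    (\<Sum>j | j \<in> {0..K} \<and> j \<le> n. c j * (a j - b j))"
proof -
  have "(\<Sum>j\<in>{0..K}. c j * a j) - (\<Sum>j\<in>{0..K}. c j * b j) =
      (\<Sum>j\<in>{0..K}. if j \<le> n then c j * (a j - b j) else 0)"
    using assms by (subst sum_subtractf[symmetric]) (intro sum.cong refl, auto simp: algebra_simps)
  then show ?thesis
    using sum.inter_filter[of "{0..K}" "\<lambda>j. c j * (a j - b j)" "\<lambda>j. j \<le> n"] by simp
qed

lemma lm_combination_diff:
  assumes Ns: "0 < Ns" and p: "p < Ns * Nt"
  defines "n \<equiv> p div Ns + 1" and "i0 \<equiv> p mod Ns"
  shows "(\<Sum>j\<in>{0..k n}. c n j * g (n - j) (blk Ns x0 w (n - j)) $ i0)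
       - (\<Sum>j\<in>{0..k n}. c n j * g (n - j) (blk Ns x0 y (n - j)) $ i0)
     = (lm_mat Ns Nt k c *\<^sub>v (st_map Ns Nt g x0 w - st_map Ns Nt g x0 y)) $ p"
proof -
  let ?d = "st_map Ns Nt g x0 w - st_map Ns Nt g x0 y"
  have i0: "i0 < Ns" using Ns by (simp add: i0_def)
  have "p div Ns < Nt" using p Ns by (simp add: less_mult_imp_div_less mult.commute)
  then have d_index: "?d $ ((p div Ns - j) * Ns + i0)
      = g (n - j) (blk Ns x0 w (n - j)) $ i0 - g (n - j) (blk Ns x0 y (n - j)) $ i0"
    if "j \<le> p div Ns" for j
    using that i0 block_index_less[of "p div Ns - j" Nt i0 Ns]
    by (simp add: st_map_def n_def Suc_diff_le)
  \<comment> \<open>Steps reaching back to block 0 see the common initial state \<open>x0\<close> and cancel.\<close>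
  have "(\<Sum>j\<in>{0..k n}. c n j * g (n - j) (blk Ns x0 w (n - j)) $ i0)
       - (\<Sum>j\<in>{0..k n}. c n j * g (n - j) (blk Ns x0 y (n - j)) $ i0)
     = (\<Sum>j | j \<in> {0..k n} \<and> j \<le> p div Ns.
          c n j * (g (n - j) (blk Ns x0 w (n - j)) $ i0 - g (n - j) (blk Ns x0 y (n - j)) $ i0))"
    by (rule sum_mult_diff_eq_sum_le) (simp add: n_def blk_def)
  also have "\<dots> = (\<Sum>j | j \<in> {0..k n} \<and> j \<le> p div Ns. c n j * ?d $ ((p div Ns - j) * Ns + i0))"
    by (intro sum.cong refl) (simp add: d_index)
  also have "\<dots> = (lm_mat Ns Nt k c *\<^sub>v ?d) $ p"
    using lm_mat_mult_vec_index[OF Ns p, of ?d k c] by (simp add: n_def i0_def st_map_carrier)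
  finally show ?thesis .
qed

lemma st_res_diff:
  fixes f :: "real vec \<Rightarrow> real \<Rightarrow> real vec" and dt :: real and x0 :: "real vec"
  assumes Ns: "0 < Ns" and w: "w \<in> carrier_vec (Ns * Nt)" and y: "y \<in> carrier_vec (Ns * Nt)"
  defines "F \<equiv> st_map Ns Nt (\<lambda>n v. f v (real n * dt)) x0"
  shows "st_res Ns Nt dt f x0 k alpha beta w - st_res Ns Nt dt f x0 k alpha beta y =
    lm_mat Ns Nt k alpha *\<^sub>v (w - y) - dt \<cdot>\<^sub>v (lm_mat Ns Nt k beta *\<^sub>v (F w - F y))"
proof (rule eq_vecI)
  fix p assume "p < dim_vec (lm_mat Ns Nt k alpha *\<^sub>v (w - y) - dt \<cdot>\<^sub>v (lm_mat Ns Nt k beta *\<^sub>v (F w - F y)))"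
  then have p: "p < Ns * Nt" by (simp add: lm_mat_carrier[THEN carrier_matD(1)])
  have "p mod Ns < Ns" using Ns by simp
  then have "(st_res Ns Nt dt f x0 k alpha beta w - st_res Ns Nt dt f x0 k alpha beta y) $ p =
      ((\<Sum>j\<in>{0..k (p div Ns + 1)}. alpha (p div Ns + 1) j * blk Ns x0 w (p div Ns + 1 - j) $ (p mod Ns))
     - (\<Sum>j\<in>{0..k (p div Ns + 1)}. alpha (p div Ns + 1) j * blk Ns x0 y (p div Ns + 1 - j) $ (p mod Ns)))
     - dt * ((\<Sum>j\<in>{0..k (p div Ns + 1)}. beta (p div Ns + 1) j *
          f (blk Ns x0 w (p div Ns + 1 - j)) (real (p div Ns + 1 - j) * dt) $ (p mod Ns))
       - (\<Sum>j\<in>{0..k (p div Ns + 1)}. beta (p div Ns + 1) j *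
          f (blk Ns x0 y (p div Ns + 1 - j)) (real (p div Ns + 1 - j) * dt) $ (p mod Ns)))"
    using p by (simp add: st_res_def lm_res_def algebra_simps)
  also have "\<dots> = (lm_mat Ns Nt k alpha *\<^sub>v (w - y) - dt \<cdot>\<^sub>v (lm_mat Ns Nt k beta *\<^sub>v (F w - F y))) $ p"
    using p lm_combination_diff[OF Ns p, where c = alpha and g = "\<lambda>_ v. v"]
      lm_combination_diff[OF Ns p, where c = beta and g = "\<lambda>n v. f v (real n * dt)"]
    by (simp add: F_def st_map_id[OF Ns w] st_map_id[OF Ns y] lm_mat_carrier[THEN carrier_matD(1)])
  finally show "(st_res Ns Nt dt f x0 k alpha beta w - st_res Ns Nt dt f x0 k alpha beta y) $ p = \<dots>" .
qed (simp add: st_res_def lm_mat_carrier[THEN carrier_matD(1)])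

lemma st_res_eq_diff_of_solution:
  fixes f :: "real vec \<Rightarrow> real \<Rightarrow> real vec" and dt :: real and x0 :: "real vec"
  assumes Ns: "0 < Ns" and w: "w \<in> carrier_vec (Ns * Nt)" and x: "x \<in> carrier_vec (Ns * Nt)"
    and x_sol: "st_res Ns Nt dt f x0 k alpha beta x = 0\<^sub>v (Ns * Nt)"
  defines "F \<equiv> st_map Ns Nt (\<lambda>n v. f v (real n * dt)) x0"
  shows "st_res Ns Nt dt f x0 k alpha beta w =
    lm_mat Ns Nt k alpha *\<^sub>v (w - x) - dt \<cdot>\<^sub>v (lm_mat Ns Nt k beta *\<^sub>v (F w - F x))"
proof -
  have "st_res Ns Nt dt f x0 k alpha beta w =
      st_res Ns Nt dt f x0 k alpha beta w - st_res Ns Nt dt f x0 k alpha beta x"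
    using x_sol by (simp add: st_res_def)
  then show ?thesis using st_res_diff[OF Ns w x] by (simp add: F_def)
qed

lemma st_map_lipschitz:
  assumes L: "0 \<le> L"
    and g_dim: "\<And>n v. 1 \<le> n \<Longrightarrow> n \<le> Nt \<Longrightarrow> v \<in> carrier_vec Ns \<Longrightarrow> g n v \<in> carrier_vec Ns"
    and g_lip: "\<And>n v u. 1 \<le> n \<Longrightarrow> n \<le> Nt \<Longrightarrow> v \<in> carrier_vec Ns \<Longrightarrow> u \<in> carrier_vec Ns \<Longrightarrow>
       vnorm2 (g n v - g n u) \<le> L * vnorm2 (v - u)"
    and w: "w \<in> carrier_vec (Ns * Nt)" and y: "y \<in> carrier_vec (Ns * Nt)"
  shows "vnorm2 (st_map Ns Nt g x0 w - st_map Ns Nt g x0 y) \<le> L * vnorm2 (w - y)"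
proof -
  let ?D = "st_map Ns Nt g x0 w - st_map Ns Nt g x0 y"
  let ?bw = "\<lambda>m. blk Ns x0 w (m + 1)" and ?by = "\<lambda>m. blk Ns x0 y (m + 1)"
  have block: "(\<Sum>i<Ns. (?D $ (m * Ns + i))\<^sup>2) \<le> L\<^sup>2 * (\<Sum>i<Ns. ((w - y) $ (m * Ns + i))\<^sup>2)"
    if m: "m < Nt" for m
  proof -
    have b: "?bw m \<in> carrier_vec Ns" "?by m \<in> carrier_vec Ns" by (auto simp: blk_def)
    have gb: "g (m + 1) (?bw m) \<in> carrier_vec Ns" "g (m + 1) (?by m) \<in> carrier_vec Ns"
      using g_dim[OF _ _ b(1)] g_dim[OF _ _ b(2)] m by auto
    have "(\<Sum>i<Ns. (?D $ (m * Ns + i))\<^sup>2) =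
        scalar_prod (g (m + 1) (?bw m) - g (m + 1) (?by m)) (g (m + 1) (?bw m) - g (m + 1) (?by m))"
      unfolding scalar_prod_self_eq_sum using gb block_index_less[OF m]
      by (intro sum.cong) (auto simp: st_map_def)
    also have "\<dots> \<le> L\<^sup>2 * scalar_prod (?bw m - ?by m) (?bw m - ?by m)"
      using g_lip[OF _ _ b] m L by (simp add: vnorm2_le_iff_scalar_prod_le)
    also have "scalar_prod (?bw m - ?by m) (?bw m - ?by m) = (\<Sum>i<Ns. ((w - y) $ (m * Ns + i))\<^sup>2)"
      unfolding scalar_prod_self_eq_sum using w y block_index_less[OF m]
      by (intro sum.cong) (auto simp: blk_def)
    finally show ?thesis .
  qed
  have "dim_vec ?D = Ns * Nt" by (simp add: st_map_def)
  then have "scalar_prod ?D ?D = (\<Sum>m<Nt. \<Sum>i<Ns. (?D $ (m * Ns + i))\<^sup>2)"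
    unfolding scalar_prod_self_eq_sum by (simp only: sum_lessThan_mult_blocks)
  also have "\<dots> \<le> (\<Sum>m<Nt. L\<^sup>2 * (\<Sum>i<Ns. ((w - y) $ (m * Ns + i))\<^sup>2))"
    by (intro sum_mono block) simp
  also have "\<dots> = L\<^sup>2 * scalar_prod (w - y) (w - y)"
    using y unfolding scalar_prod_self_eq_sum
    by (simp only: index_minus_vec(2) carrier_vecD sum_lessThan_mult_blocks sum_distrib_left)
  finally show ?thesis
    using L by (simp add: vnorm2_le_iff_scalar_prod_le)
qed

lemma st_velocity_lipschitz:
  fixes f :: "real vec \<Rightarrow> real \<Rightarrow> real vec"
  assumes f_dim: "\<And>v t. v \<in> carrier_vec Ns \<Longrightarrow> f v t \<in> carrier_vec Ns"
    and f_lip: "\<And>v u t. v \<in> carrier_vec Ns \<Longrightarrow> u \<in> carrier_vec Ns \<Longrightarrow> 0 \<le> t \<Longrightarrow> t \<le> T \<Longrightarrow>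
       vnorm2 (f v t - f u t) \<le> Lf * vnorm2 (v - u)"
    and Lf: "0 \<le> Lf" and dt: "0 \<le> dt" "real Nt * dt \<le> T"
    and w: "w \<in> carrier_vec (Ns * Nt)" and y: "y \<in> carrier_vec (Ns * Nt)"
  shows "vnorm2 (st_map Ns Nt (\<lambda>n v. f v (real n * dt)) x0 w - st_map Ns Nt (\<lambda>n v. f v (real n * dt)) x0 y)
    \<le> Lf * vnorm2 (w - y)"
proof (rule st_map_lipschitz[OF Lf _ _ w y])
  fix n assume "1 \<le> n" "n \<le> Nt"
  then have "0 \<le> real n * dt" "real n * dt \<le> T"
    using dt mult_right_mono[of "real n" "real Nt" dt] by auto
  then show "vnorm2 (f v (real n * dt) - f u (real n * dt)) \<le> Lf * vnorm2 (v - u)"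
    if "v \<in> carrier_vec Ns" "u \<in> carrier_vec Ns" for v u
    using f_lip that by blast
qed (rule f_dim)

lemma residual_minimizer_quasi_optimal:
  fixes g rho phi :: "'a \<Rightarrow> real"
  assumes xt: "xt \<in> S" and P: "0 < P" and den: "0 < den" and num: "0 \<le> num"
    and g_nonneg: "\<And>w. 0 \<le> g w"
    and stability: "den * g xt \<le> rho xt"
    and weighting: "P * rho xt \<le> phi xt"
    and minimal: "\<And>w. w \<in> S \<Longrightarrow> phi xt \<le> phi w"
    and continuity: "\<And>w. w \<in> S \<Longrightarrow> phi w \<le> num * g w"
  shows "g xt \<le> 1 / P * (num / den) * (INF w\<in>S. g w)"
proof -
  define C where "C = 1 / P * (num / den)"
  have C: "0 \<le> C" using P den num by (simp add: C_def)
  have bound: "g xt \<le> C * g w" if "w \<in> S" for w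
  proof -
    have "P * den * g xt \<le> num * g w"
      using stability weighting minimal[OF that] continuity[OF that] P
      by (smt (verit) mult.assoc mult_left_mono)
    then show ?thesis using P den by (simp add: C_def field_simps)
  qed
  show ?thesis
    unfolding C_def[symmetric]
  proof (cases "C = 0")
    case True
    then show "g xt \<le> C * (INF w\<in>S. g w)" using bound[OF xt] by simp
  next
    case False
    then have "g xt / C \<le> (INF w\<in>S. g w)"
      using C xt bound g_nonneg by (intro cINF_greatest) (auto simp: pos_divide_le_eq mult.commute)
    then show "g xt \<le> C * (INF w\<in>S. g w)" using C False by (simp add: pos_divide_le_eq mult.commute)
  qed
qed

theorem mainTheorem3:
  fixes Ns Nt nst zb :: nat and T Lf P :: real
    and f :: "real vec \<Rightarrow> real \<Rightarrow> real vec" and x0 :: "real vec"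
    and k :: "nat \<Rightarrow> nat" and alpha beta :: "nat \<Rightarrow> nat \<Rightarrow> real"
    and pib :: "nat \<Rightarrow> real vec" and Abar :: "real mat"
    and x xt :: "real vec"
  assumes Ns_pos: "Ns > 0" and Nt_pos: "Nt > 0" and T_pos: "T > 0"
    and x0_dim: "x0 \<in> carrier_vec Ns"
    and f_dim: "\<And>w t. w \<in> carrier_vec Ns \<Longrightarrow> f w t \<in> carrier_vec Ns"
    and k_le: "\<And>n. 1 \<le> n \<Longrightarrow> n \<le> Nt \<Longrightarrow> k n \<le> n"
    and alpha0: "\<And>n. 1 \<le> n \<Longrightarrow> n \<le> Nt \<Longrightarrow> alpha n 0 \<noteq> 0"
    and pi_dim: "\<And>i. 1 \<le> i \<Longrightarrow> i \<le> nst \<Longrightarrow> pib i \<in> carrier_vec (Ns * Nt)"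
    and Abar_dim: "Abar \<in> carrier_mat zb (Ns * Nt)"
    and Lf_pos: "Lf > 0"
    and lipschitz: "\<And>w y t. w \<in> carrier_vec Ns \<Longrightarrow> y \<in> carrier_vec Ns \<Longrightarrow> 0 \<le> t \<Longrightarrow> t \<le> T \<Longrightarrow>
                     vnorm2 (f w t - f y t) \<le> Lf * vnorm2 (w - y)"
    and dt_small: "(T / real Nt) * Lf * sigma_max (lm_mat Ns Nt k beta) < sigma_min (lm_mat Ns Nt k alpha)"
    and P_pos: "P > 0"
    and P_bound: "\<And>w. w \<in> trial_space Ns Nt x0 nst pib \<Longrightarrow>
        vnorm2 (Abar *\<^sub>v st_res Ns Nt (T / real Nt) f x0 k alpha beta w)
          \<ge> P * vnorm2 (st_res Ns Nt (T / real Nt) f x0 k alpha beta w)"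
    and x_dim: "x \<in> carrier_vec (Ns * Nt)"
    and x_sol: "st_res Ns Nt (T / real Nt) f x0 k alpha beta x = 0\<^sub>v (Ns * Nt)"
    and xt_in: "xt \<in> trial_space Ns Nt x0 nst pib"
    and xt_min: "\<And>w. w \<in> trial_space Ns Nt x0 nst pib \<Longrightarrow>
        vnorm2 (Abar *\<^sub>v st_res Ns Nt (T / real Nt) f x0 k alpha beta xt)
          \<le> vnorm2 (Abar *\<^sub>v st_res Ns Nt (T / real Nt) f x0 k alpha beta w)"
  shows "vnorm2 (x - xt) \<le>
     (1 / P) * ((sigma_max (Abar * lm_mat Ns Nt k alpha)
                 + (T / real Nt) * Lf * sigma_max (Abar * lm_mat Ns Nt k beta))
               / (sigma_min (lm_mat Ns Nt k alpha) - (T / real Nt) * Lf * sigma_max (lm_mat Ns Nt k beta)))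
     * (INF w\<in>trial_space Ns Nt x0 nst pib. vnorm2 (x - w))"
proof -
  define dt where "dt = T / real Nt"
  define N where "N = Ns * Nt"
  define A where "A = lm_mat Ns Nt k alpha"
  define B where "B = lm_mat Ns Nt k beta"
  define F where "F = st_map Ns Nt (\<lambda>n v. f v (real n * dt)) x0"
  let ?r = "st_res Ns Nt dt f x0 k alpha beta"
  have N: "0 < N" and dt: "0 < dt" "real Nt * dt \<le> T" using Ns_pos Nt_pos T_pos by (simp_all add: N_def dt_def)
  have A: "A \<in> carrier_mat N N" and B: "B \<in> carrier_mat N N"
    by (simp_all add: A_def B_def N_def lm_mat_carrier)
  have x: "x \<in> carrier_vec N" and S: "\<And>w. w \<in> trial_space Ns Nt x0 nst pib \<Longrightarrow> w \<in> carrier_vec N"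
    using x_dim by (auto simp: N_def trial_space_def)
  have F_diff: "F w - F x \<in> carrier_vec N" for w
    by (simp add: F_def N_def st_map_carrier)
  have F_lip: "vnorm2 (F w - F x) \<le> Lf * vnorm2 (w - x)" if "w \<in> carrier_vec N" for w
    using st_velocity_lipschitz[where f = f and T = T and Lf = Lf, OF f_dim lipschitz] Lf_pos dt that x
    by (auto simp: F_def N_def)
  have res: "?r w = A *\<^sub>v (w - x) - dt \<cdot>\<^sub>v (B *\<^sub>v (F w - F x))" if "w \<in> carrier_vec N" for w
    using st_res_eq_diff_of_solution[OF Ns_pos _ x_dim x_sol] that
    by (simp add: A_def B_def F_def N_def dt_def)
  show ?thesis
    unfolding dt_def[symmetric] A_def[symmetric] B_def[symmetric]
  proof (rule residual_minimizer_quasi_optimal[where g = "\<lambda>w. vnorm2 (x - w)"])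
    show "0 < sigma_min A - dt * Lf * sigma_max B"
      using dt_small by (simp add: A_def B_def dt_def)
    show "0 \<le> sigma_max (Abar * A) + dt * Lf * sigma_max (Abar * B)"
      using sigma_max_nonneg[OF mult_carrier_mat[OF Abar_dim[folded N_def] A] N]
        sigma_max_nonneg[OF mult_carrier_mat[OF Abar_dim[folded N_def] B] N] dt Lf_pos
      by (auto intro!: add_nonneg_nonneg mult_nonneg_nonneg)
    show "(sigma_min A - dt * Lf * sigma_max B) * vnorm2 (x - xt) \<le> vnorm2 (?r xt)"
      using residual_lower_bound[OF A B N _ F_diff _ F_lip, of xt dt] S[OF xt_in] x dt
        vnorm2_minus_commute[OF x S[OF xt_in]] res[OF S[OF xt_in]]
      by simp
    show "vnorm2 (Abar *\<^sub>v ?r w) \<le> (sigma_max (Abar * A) + dt * Lf * sigma_max (Abar * B)) * vnorm2 (x - w)"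
      if "w \<in> trial_space Ns Nt x0 nst pib" for w
      using weighted_residual_upper_bound[OF _ A B N _ F_diff _ F_lip, of Abar zb w dt] Abar_dim
        S[OF that] x dt vnorm2_minus_commute[OF x S[OF that]] res[OF S[OF that]]
      by (simp add: N_def)
  qed (use xt_in P_pos P_bound xt_min vnorm2_nonneg in \<open>auto simp: dt_def\<close>)
qed

end
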